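(* Let $N\ge1$ and let $\mathfrak{g}^{(N)}$ be the Lie–Poisson algebra with coordinate functions $y_i^\alpha$ ($\alpha=1,2,3$, $i=0,\dots,N-1$) and brackets $$\{y_i^\alpha,y_j^\beta\}=\begin{cases}\epsilon^{\alpha\beta}_{\ \ \gamma}\,y^\gamma_{i+j}, & i+j<N,\\ 0,& i+j\ge N,\end{cases}$$ extended to polynomial functions by bilinearity and the Leibniz rule. Fix $\mathbf{b}=(b^1,b^2,b^3)^T\in\mathbb{R}^3$ (a constant), write $\mathbf{y}_i=(y_i^1,y_i^2,y_i^3)^T$ and let $\langle\cdot,\cdot\rangle$ be the Euclidean scalar product. For $k=1,\dots,N$ define $$H_k=2\langle\mathbf{b},\mathbf{y}_{k-1}\rangle+\sum_{i=0}^{k-2}\langle\mathbf{y}_i,\mathbf{y}_{k-i-2}\rangle,\qquad C_k=\sum_{i=k-1}^{N-1}\langle\mathbf{y}_i,\mathbf{y}_{N+k-i-2}\rangle.$$ Then, with $\mathcal{L}(\lambda)=\sum_{\alpha=1}^3\sigma^\alpha\big[b^\alpha+\sum_{i=0}^{N-1}y_i^\alpha\lambda^{-i-1}\big]$, one has $4\det(\mathcal{L}(\lambda)-\mu\mathbb 1)=4\mu^2+\langle\mathbf{b},\mathbf{b}\rangle+\sum_{k=1}^N H_k\lambda^{-k}+\sum_{k=1}^N C_k\lambda^{-N-k}$, and $$\{H_i,H_k\}=\{C_i,H_k\}=\{C_i,C_k\}=0\qquad (i,k=1,\dots,N).$$ Moreover each $C_k$ is a Casimir function of $\mathfrak{g}^{(N)}$: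 $\{C_k,y_j^\beta\}=0$ for all $\beta=1,2,3$, $j=0,\dots,N-1$, $k=1,\dots,N$.
   Context: $\epsilon^{\alpha\beta}_{\ \ \gamma}$ is the totally skew-symmetric tensor with $\epsilon^{12}_{\ \ 3}=1$, and repeated index $\gamma$ is summed over $1,2,3$. The matrices are $\sigma^1=\tfrac12\begin{pmatrix}0&\mathrm{i}\\ \mathrm{i}&0\end{pmatrix}$, $\sigma^2=\tfrac12\begin{pmatrix}0&1\\-1&0\end{pmatrix}$, $\sigma^3=\tfrac12\begin{pmatrix}\mathrm{i}&0\\0&-\mathrm{i}\end{pmatrix}$, and $\mathbb 1$ is the $2\times 2$ identity. Empty sums are zero. *)

theory Defs
  imports "HOL-Analysis.Analysis"
begin

text \<open>Points of the phase space: y i a is the coordinate y_i^a (i = 0..N-1, a = 1,2,3);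
  values at other indices are irrelevant.  Vectors in R^3 are functions on {1,2,3}.\<close>

type_synonym point = "nat \<Rightarrow> nat \<Rightarrow> real"

definition eps :: "nat \<Rightarrow> nat \<Rightarrow> nat \<Rightarrow> real" where
  "eps a b c =
    (if (a,b,c) \<in> {(1,2,3),(2,3,1),(3,1,2)} then 1
     else if (a,b,c) \<in> {(2,1,3),(3,2,1),(1,3,2)} then -1 else 0)"

definition ip :: "(nat \<Rightarrow> real) \<Rightarrow> (nat \<Rightarrow> real) \<Rightarrow> real" where
  "ip u v = (\<Sum>a\<in>{1,2,3}. u a * v a)"

definition pd :: "(point \<Rightarrow> real) \<Rightarrow> nat \<Rightarrow> nat \<Rightarrow> point \<Rightarrow> real" where
  "pd f i a y = deriv (\<lambda>t. f (y(i := (y i)(a := t)))) (y i a)"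

definition coord :: "nat \<Rightarrow> nat \<Rightarrow> point \<Rightarrow> real" where
  "coord i a = (\<lambda>y. y i a)"

text \<open>Lie--Poisson bracket of g^(N): the unique extension (bilinear, Leibniz) of
  {y_i^a, y_j^b} = eps^{ab}_c y_{i+j}^c (i+j<N), 0 otherwise, to polynomial functions.\<close>
definition pbracket :: "nat \<Rightarrow> (point \<Rightarrow> real) \<Rightarrow> (point \<Rightarrow> real) \<Rightarrow> point \<Rightarrow> real" where
  "pbracket N f g y =
    (\<Sum>i<N. \<Sum>j<N. \<Sum>a\<in>{1,2,3}. \<Sum>b\<in>{1,2,3}.
       pd f i a y * pd g j b y *
       (if i + j < N then (\<Sum>c\<in>{1,2,3}. eps a b c * y (i + j) c) else 0))"

definition Hk :: "(nat \<Rightarrow> real) \<Rightarrow> nat \<Rightarrow> point \<Rightarrow> real" where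
  "Hk bv k y = 2 * ip bv (y (k - 1)) + (\<Sum>i<k - 1. ip (y i) (y (k - i - 2)))"

definition Ck :: "nat \<Rightarrow> nat \<Rightarrow> point \<Rightarrow> real" where
  "Ck N k y = (\<Sum>i\<in>{k - 1..<N}. ip (y i) (y (N + k - i - 2)))"

definition mat2 :: "complex \<Rightarrow> complex \<Rightarrow> complex \<Rightarrow> complex \<Rightarrow> complex^2^2" where
  "mat2 p q r s = (\<chi> i j. if i = 1 then (if j = 1 then p else q) else (if j = 1 then r else s))"

definition msc :: "complex \<Rightarrow> complex^2^2 \<Rightarrow> complex^2^2" where
  "msc c M = (\<chi> i j. c * M $ i $ j)"

definition sigma :: "nat \<Rightarrow> complex^2^2" where
  "sigma a = (if a = 1 then msc (1/2) (mat2 0 \<i> \<i> 0)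
              else if a = 2 then msc (1/2) (mat2 0 1 (-1) 0)
              else msc (1/2) (mat2 \<i> 0 0 (-\<i>)))"

definition Lax :: "nat \<Rightarrow> (nat \<Rightarrow> real) \<Rightarrow> point \<Rightarrow> complex \<Rightarrow> complex^2^2" where
  "Lax N bv y lam = (\<Sum>a\<in>{1,2,3}.
     msc (of_real (bv a) + (\<Sum>i<N. of_real (y i a) * inverse lam ^ (i + 1))) (sigma a))"

end

theory Submission
  imports Defs
begin

(* With c_a = b^a + \<Sigma>_i y_i^a \<lambda>^(-i-1) one has L = \<Sigma>_a c_a \<sigma>^a and
  4 det (L - \<mu>) = 4 \<mu>^2 + \<Sigma>_a c_a^2; in the square of the series c_a the coefficients of
  the low powers of 1/\<lambda> give H_k, those of the high powers C_k.

  The bracket is {f, g} = \<Sigma>_(i+j<N) [grad_i f, grad_j g, y_(i+j)] with the scalar triple product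
  [u, v, w].  Since grad_i C_k = 2 y_(N+k-2-i), the terms of {C_k, y_j^\<beta>} have the form
  [y_p, e_\<beta>, y_q] over an index set invariant under p <-> q, so they cancel; and a function whose
  brackets with all coordinates vanish commutes with everything.  Writing yb_0 = b and
  yb_(n+1) = y_n, grad_i H_k = 2 yb_(k-1-i), so {H_m, H_k} is a sum of the alternating
  [yb_p, yb_q, yb_r] over triples with p + q + r = m + k - 1, which again cancel in pairs. *)

lemma det_sigma_combination:
  fixes c :: "nat \<Rightarrow> complex"
  shows "4 * det ((\<Sum>a\<in>{1,2,3}. msc (c a) (sigma a)) - msc mu (mat 1)) =
    4 * mu^2 + (\<Sum>a\<in>{1,2,3}. (c a)^2)"
proof -
  have "(2::2) \<noteq> 1" by simp
  then show ?thesis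
    unfolding det_2
    by (simp add: msc_def sigma_def mat2_def mat_def power2_eq_square algebra_simps)
qed

lemma square_shifted_series:
  fixes Y :: "nat \<Rightarrow> 'a::comm_semiring_1"
  shows "(\<Sum>i<N. Y i * x^(i+1))^2 =
     (\<Sum>k\<in>{1..N}. (\<Sum>i<k-1. Y i * Y (k-i-2)) * x^k)
   + (\<Sum>k\<in>{1..N}. (\<Sum>i\<in>{k-1..<N}. Y i * Y (N+k-i-2)) * x^(N+k))"
proof -
  define f where "f = (\<lambda>(i,j). Y i * Y j * x^(i+j+2))"
  define A where "A = {..<N} \<times> {..<N}"
  define low where "low = {(i,j). i + j + 2 \<le> N}"
  have pow: "x * (x * x ^ (n - 2)) = x ^ n" if "2 \<le> n" for n
    using that by (metis add_2_eq_Suc le_add_diff_inverse power_Suc)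
  have "(\<Sum>i<N. Y i * x^(i+1))^2 = sum f A"
    by (simp add: A_def f_def power2_eq_square sum_product sum.cartesian_product power_add algebra_simps)
  also have "\<dots> = sum f (A \<inter> low) + sum f (A - low)"
    by (simp add: A_def sum.Int_Diff)
  also have "sum f (A \<inter> low) = (\<Sum>(k,i)\<in>Sigma {1..N} (\<lambda>k. {..<k-1}). Y i * Y (k-i-2) * x^k)"
    by (rule sum.reindex_bij_witness[where i="\<lambda>(k,i). (i, k-i-2)" and j="\<lambda>(i,j). (i+j+2, i)"])
       (auto simp: A_def low_def f_def pow)
  also have "\<dots> = (\<Sum>k\<in>{1..N}. (\<Sum>i<k-1. Y i * Y (k-i-2)) * x^k)"
    by (simp add: sum.Sigma[symmetric] sum_distrib_right)
  also have "sum f (A - low) = (\<Sum>(k,i)\<in>Sigma {1..N} (\<lambda>k. {k-1..<N}). Y i * Y (N+k-i-2) * x^(N+k))"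
    by (rule sum.reindex_bij_witness[where i="\<lambda>(k,i). (i, N+k-i-2)" and j="\<lambda>(i,j). (i+j+2-N, i)"])
       (auto simp: A_def low_def f_def pow)
  also have "\<dots> = (\<Sum>k\<in>{1..N}. (\<Sum>i\<in>{k-1..<N}. Y i * Y (N+k-i-2)) * x^(N+k))"
    by (simp add: sum.Sigma[symmetric] sum_distrib_right)
  finally show ?thesis .
qed

lemma square_affine_series:
  fixes Y :: "nat \<Rightarrow> 'a::comm_semiring_1"
  shows "(B + (\<Sum>i<N. Y i * x^(i+1)))^2 = B^2 +
     (\<Sum>k\<in>{1..N}. (2 * B * Y (k-1) + (\<Sum>i<k-1. Y i * Y (k-i-2))) * x^k)
   + (\<Sum>k\<in>{1..N}. (\<Sum>i\<in>{k-1..<N}. Y i * Y (N+k-i-2)) * x^(N+k))"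
proof -
  have "(\<Sum>i<N. Y i * x^(i+1)) = (\<Sum>k\<in>{1..N}. Y (k-1) * x^k)"
    by (rule sum.reindex_bij_witness[where i="\<lambda>k. k - 1" and j="\<lambda>i. i+1"]) auto
  then have "2 * B * (\<Sum>i<N. Y i * x^(i+1)) = (\<Sum>k\<in>{1..N}. 2 * B * Y (k-1) * x^k)"
    by (simp add: sum_distrib_left mult.assoc)
  moreover have "(B + (\<Sum>i<N. Y i * x^(i+1)))^2 =
      B^2 + 2 * B * (\<Sum>i<N. Y i * x^(i+1)) + (\<Sum>i<N. Y i * x^(i+1))^2"
    by (simp add: power2_eq_square algebra_simps mult_2)
  ultimately show ?thesis
    unfolding square_shifted_series by (simp add: algebra_simps sum.distrib)
qed

lemma det_Lax_expansion:
  "4 * det (Lax N bv y lam - msc mu (mat 1)) =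
     4 * mu ^ 2 + of_real (ip bv bv)
     + (\<Sum>k\<in>{1..N}. of_real (Hk bv k y) * inverse lam ^ k)
     + (\<Sum>k\<in>{1..N}. of_real (Ck N k y) * inverse lam ^ (N + k))"
  unfolding Lax_def det_sigma_combination square_affine_series Hk_def Ck_def ip_def
  by (simp add: sum.distrib sum_distrib_left sum_distrib_right sum.swap[of _ "{1,2,3::nat}"]
      power2_eq_square algebra_simps)

definition upd_coord :: "point \<Rightarrow> nat \<Rightarrow> nat \<Rightarrow> real \<Rightarrow> point" where
  "upd_coord y i a t = y(i := (y i)(a := t))"

lemma pd_eqI:
  "((\<lambda>t. f (upd_coord y i a t)) has_real_derivative D) (at (y i a)) \<Longrightarrow> pd f i a y = D"
  unfolding pd_def upd_coord_def[symmetric] by (rule DERIV_imp_deriv)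

lemma upd_coord_has_derivative:
  "((\<lambda>t. upd_coord y i a t p c) has_real_derivative (if p = i \<and> c = a then 1 else 0)) (at s)"
proof (cases "p = i \<and> c = a")
  case False
  then have "(\<lambda>t. upd_coord y i a t p c) = (\<lambda>t. y p c)"
    by (auto simp: upd_coord_def)
  then show ?thesis
    unfolding if_not_P[OF False] by simp
qed (simp add: upd_coord_def)

lemma ip_upd_coord_has_derivative:
  assumes "a \<in> {1,2,3}"
  shows "((\<lambda>t. ip (upd_coord y i a t p) (upd_coord y i a t q)) has_real_derivative
           (if p = i then y q a else 0) + (if q = i then y p a else 0)) (at (y i a))"
  unfolding ip_def
  by (rule DERIV_cong[OF DERIV_sum[OF DERIV_mult[OF upd_coord_has_derivative upd_coord_has_derivative]]])
     (use assms in \<open>auto simp: upd_coord_def\<close>)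

lemma reflected_quadratic_has_derivative:
  assumes "a \<in> {1,2,3}"
  shows "((\<lambda>t. \<Sum>l\<in>{n..<m}. ip (upd_coord y i a t l) (upd_coord y i a t (m + n - 1 - l)))
           has_real_derivative (if n \<le> i \<and> i < m then 2 * y (m + n - 1 - i) a else 0)) (at (y i a))"
proof (rule DERIV_cong[OF DERIV_sum[OF ip_upd_coord_has_derivative[OF assms]]])
  have "(\<Sum>l\<in>{n..<m}. if m + n - 1 - l = i then y l a else 0)
      = (\<Sum>l\<in>{n..<m}. if m + n - 1 - (m + n - Suc l) = i then y (m + n - Suc l) a else 0)"
    by (rule sum.atLeastLessThan_rev)
  also have "\<dots> = (\<Sum>l\<in>{n..<m}. if l = i then y (m + n - 1 - l) a else 0)"
    by (rule sum.cong) auto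
  finally show "(\<Sum>l\<in>{n..<m}. (if l = i then y (m + n - 1 - l) a else 0)
                   + (if m + n - 1 - l = i then y l a else 0))
      = (if n \<le> i \<and> i < m then 2 * y (m + n - 1 - i) a else 0)"
    by (simp add: sum.distrib)
qed

definition yb :: "(nat \<Rightarrow> real) \<Rightarrow> point \<Rightarrow> nat \<Rightarrow> nat \<Rightarrow> real" where
  "yb bv y n = (if n = 0 then bv else y (n - 1))"

lemma pd_Hk:
  assumes "a \<in> {1,2,3}" and "1 \<le> k"
  shows "pd (Hk bv k) i a y = (if i < k then 2 * yb bv y (k - 1 - i) a else 0)"
proof (rule pd_eqI)
  have lin: "((\<lambda>t. ip bv (upd_coord y i a t (k - 1))) has_real_derivative
               (if k - 1 = i then bv a else 0)) (at (y i a))"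
    unfolding ip_def
    by (rule DERIV_cong[OF DERIV_sum[OF DERIV_cmult[OF upd_coord_has_derivative]]])
       (use assms in auto)
  have Hk_eq: "Hk bv k = (\<lambda>y'. 2 * ip bv (y' (k - 1))
                 + (\<Sum>l\<in>{0..<k - 1}. ip (y' l) (y' (k - 1 + 0 - 1 - l))))"
    by (simp add: Hk_def atLeast0LessThan diff_commute fun_eq_iff)
  have "((\<lambda>t. 2 * ip bv (upd_coord y i a t (k - 1))
           + (\<Sum>l\<in>{0..<k - 1}. ip (upd_coord y i a t l) (upd_coord y i a t (k - 1 + 0 - 1 - l))))
         has_real_derivative 2 * (if k - 1 = i then bv a else 0)
           + (if 0 \<le> i \<and> i < k - 1 then 2 * y (k - 1 + 0 - 1 - i) a else 0)) (at (y i a))"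
    by (intro DERIV_add DERIV_cmult lin reflected_quadratic_has_derivative assms(1))
  then show "((\<lambda>t. Hk bv k (upd_coord y i a t)) has_real_derivative
               (if i < k then 2 * yb bv y (k - 1 - i) a else 0)) (at (y i a))"
    unfolding Hk_eq by (rule DERIV_cong) (use assms(2) in \<open>auto simp: yb_def\<close>)
qed

lemma pd_Ck:
  assumes "a \<in> {1,2,3}" and "1 \<le> k"
  shows "pd (Ck N k) i a y = (if k - 1 \<le> i \<and> i < N then 2 * y (N + k - 2 - i) a else 0)"
proof (rule pd_eqI)
  have Ck_eq: "Ck N k = (\<lambda>y'. \<Sum>l\<in>{k - 1..<N}. ip (y' l) (y' (N + (k - 1) - 1 - l)))"
    using assms(2) by (simp add: Ck_def fun_eq_iff)
  show "((\<lambda>t. Ck N k (upd_coord y i a t)) has_real_derivative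
               (if k - 1 \<le> i \<and> i < N then 2 * y (N + k - 2 - i) a else 0)) (at (y i a))"
    unfolding Ck_eq
    by (rule DERIV_cong[OF reflected_quadratic_has_derivative[OF assms(1)]]) (use assms(2) in auto)
qed

lemma pd_coord: "pd (coord j b) i a y = (if i = j \<and> a = b then 1 else 0)"
  by (rule pd_eqI) (use upd_coord_has_derivative[of y i a j b] in \<open>auto simp: coord_def\<close>)

definition triple_prod :: "(nat \<Rightarrow> real) \<Rightarrow> (nat \<Rightarrow> real) \<Rightarrow> (nat \<Rightarrow> real) \<Rightarrow> real" where
  "triple_prod u v w = (\<Sum>a\<in>{1,2,3}. \<Sum>b\<in>{1,2,3}. \<Sum>c\<in>{1,2,3}. eps a b c * u a * v b * w c)"

lemma triple_prod_swap12: "triple_prod v u w = - triple_prod u v w"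
  by (simp add: triple_prod_def eps_def algebra_simps)

lemma triple_prod_swap23: "triple_prod u w v = - triple_prod u v w"
  by (simp add: triple_prod_def eps_def algebra_simps)

lemma triple_prod_swap13: "triple_prod w v u = - triple_prod u v w"
  by (metis triple_prod_swap12 triple_prod_swap23)

lemma triple_prod_cong:
  "(\<And>a. a \<in> {1,2,3} \<Longrightarrow> u a = u' a) \<Longrightarrow> (\<And>a. a \<in> {1,2,3} \<Longrightarrow> v a = v' a) \<Longrightarrow>
   triple_prod u v w = triple_prod u' v' w"
  by (simp add: triple_prod_def)

lemma triple_prod_scale:
  "triple_prod (\<lambda>a. c * u a) (\<lambda>b. d * v b) w = c * d * triple_prod u v w"
  by (simp add: triple_prod_def sum_distrib_left algebra_simps)

lemma triple_prod_zero_middle [simp]: "triple_prod u (\<lambda>b. 0) w = 0"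
  by (simp add: triple_prod_def)

lemma triple_prod_expand_middle:
  "triple_prod u v w = (\<Sum>b\<in>{1,2,3}. v b * triple_prod u (\<lambda>c. if c = b then 1 else 0) w)"
  by (simp add: triple_prod_def algebra_simps)

lemma pbracket_eq_triple_prod:
  "pbracket N f g y = (\<Sum>i<N. \<Sum>j<N.
     if i + j < N then triple_prod (\<lambda>a. pd f i a y) (\<lambda>b. pd g j b y) (y (i + j)) else 0)"
  unfolding pbracket_def triple_prod_def
  by (intro sum.cong refl) (auto simp: sum_distrib_left algebra_simps)

lemma pbracket_antisym: "pbracket N g f y = - pbracket N f g y"
proof -
  have "pbracket N g f y = (\<Sum>i<N. \<Sum>j<N.
      - (if j + i < N then triple_prod (\<lambda>a. pd f j a y) (\<lambda>b. pd g i b y) (y (j + i)) else 0))"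
    unfolding pbracket_eq_triple_prod
    by (intro sum.cong refl) (simp add: triple_prod_swap12[of "\<lambda>a. pd f _ a y"] add.commute)
  also have "\<dots> = - pbracket N f g y"
    unfolding pbracket_eq_triple_prod sum_negf by (subst sum.swap) (rule refl)
  finally show ?thesis .
qed

lemma pbracket_coord:
  assumes "j < N"
  shows "pbracket N f (coord j \<beta>) y = (\<Sum>i<N.
     if i + j < N then triple_prod (\<lambda>a. pd f i a y) (\<lambda>b. if b = \<beta> then 1 else 0) (y (i + j)) else 0)"
proof -
  have "(\<Sum>j'<N. if i + j' < N then triple_prod (\<lambda>a. pd f i a y) (\<lambda>b. pd (coord j \<beta>) j' b y) (y (i + j')) else 0)
      = (\<Sum>j'<N. if j' = j then
           (if i + j < N then triple_prod (\<lambda>a. pd f i a y) (\<lambda>b. if b = \<beta> then 1 else 0) (y (i + j)) else 0) else 0)"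
    for i by (intro sum.cong) (auto simp: pd_coord)
  with assms show ?thesis
    unfolding pbracket_eq_triple_prod by simp
qed

lemma pbracket_eq_sum_pd_coord:
  "pbracket N f g y = (\<Sum>j<N. \<Sum>b\<in>{1,2,3}. pd g j b y * pbracket N f (coord j b) y)"
proof -
  have "(\<Sum>b\<in>{1,2,3}. pd g j b y * pbracket N f (coord j b) y)
      = (\<Sum>i<N. if i + j < N then triple_prod (\<lambda>a. pd f i a y) (\<lambda>b. pd g j b y) (y (i + j)) else 0)"
    if "j < N" for j
  proof -
    have mult_if: "c * (if P then x else 0) = (if P then c * x else 0)" for c x :: real and P
      by simp
    have sum_if: "(\<Sum>b\<in>B. if P then h b else 0) = (if P then sum h B else 0)" for B :: "nat set" and P and h :: "nat \<Rightarrow> real"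
      by simp
    have "(\<Sum>b\<in>{1,2,3}. pd g j b y * pbracket N f (coord j b) y)
        = (\<Sum>b\<in>{1,2,3}. \<Sum>i<N. if i + j < N then pd g j b y *
             triple_prod (\<lambda>a. pd f i a y) (\<lambda>c. if c = b then 1 else 0) (y (i + j)) else 0)"
      unfolding pbracket_coord[OF that] sum_distrib_left by (simp only: mult_if)
    also have "\<dots> = (\<Sum>i<N. if i + j < N then (\<Sum>b\<in>{1,2,3}. pd g j b y *
             triple_prod (\<lambda>a. pd f i a y) (\<lambda>c. if c = b then 1 else 0) (y (i + j))) else 0)"
      by (subst sum.swap) (simp only: sum_if)
    finally show ?thesis
      by (simp only: triple_prod_expand_middle[symmetric])
  qed
  then show ?thesis
    unfolding pbracket_eq_triple_prod by (subst sum.swap) simp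
qed

lemma pbracket_eq_0_if_casimir:
  assumes "\<And>j b. j < N \<Longrightarrow> b \<in> {1,2,3} \<Longrightarrow> pbracket N f (coord j b) y = 0"
  shows "pbracket N f g y = 0"
  by (subst pbracket_eq_sum_pd_coord) (simp add: assms)

lemma sum_eq_0_by_sign_reversing_involution:
  fixes g :: "'b \<Rightarrow> real"
  assumes "finite A" and "\<And>x. x \<in> A \<Longrightarrow> h x \<in> A" and "\<And>x. x \<in> A \<Longrightarrow> h (h x) = x"
    and "\<And>x. x \<in> A \<Longrightarrow> g (h x) = - g x"
  shows "sum g A = 0"
proof -
  have "sum g A = sum (g \<circ> h) A"
    by (rule sum.reindex_bij_witness[where i=h and j=h]) (use assms in auto)
  also have "\<dots> = - sum g A"
    using assms(4) by (simp add: sum_negf)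
  finally show ?thesis by simp
qed

lemma sum_antisymmetric_reflection_eq_0:
  fixes G :: "nat \<Rightarrow> nat \<Rightarrow> real"
  assumes antisym: "\<And>p q. G q p = - G p q" and "1 \<le> k"
  shows "(\<Sum>i\<in>{k - 1..<N - j}. G (N + k - 2 - i) (i + j)) = 0"
proof (rule sum_eq_0_by_sign_reversing_involution[where h="\<lambda>i. N + k - 2 - j - i"])
  fix i assume i: "i \<in> {k - 1..<N - j}"
  then have i: "k - 1 \<le> i" "i < N - j" by simp_all
  show "N + k - 2 - j - i \<in> {k - 1..<N - j}"
    unfolding atLeastLessThan_iff using i assms(2) by linarith
  show "N + k - 2 - j - (N + k - 2 - j - i) = i"
    using i assms(2) by linarith
  have idx: "N + k - 2 - (N + k - 2 - j - i) = i + j" "N + k - 2 - j - i + j = N + k - 2 - i"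
    using i assms(2) by linarith+
  show "G (N + k - 2 - (N + k - 2 - j - i)) (N + k - 2 - j - i + j) = - G (N + k - 2 - i) (i + j)"
    unfolding idx by (rule antisym)
qed simp

lemma triple_prod_pd_Ck:
  assumes "1 \<le> k"
  shows "triple_prod (\<lambda>a. pd (Ck N k) i a y) v w =
    (if k - 1 \<le> i \<and> i < N then 2 * triple_prod (y (N + k - 2 - i)) v w else 0)"
proof -
  have "triple_prod (\<lambda>a. pd (Ck N k) i a y) v w =
      triple_prod (\<lambda>a. (if k - 1 \<le> i \<and> i < N then 2 else 0) * y (N + k - 2 - i) a) (\<lambda>b. 1 * v b) w"
    by (rule triple_prod_cong) (use assms in \<open>auto simp: pd_Ck\<close>)
  then show ?thesis
    by (simp only: triple_prod_scale) simp
qed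

lemma triple_prod_pd_Hk:
  assumes "1 \<le> m" and "1 \<le> k"
  shows "triple_prod (\<lambda>a. pd (Hk bv m) i a y) (\<lambda>b. pd (Hk bv k) j b y) w =
    (if i < m \<and> j < k then 4 * triple_prod (yb bv y (m - 1 - i)) (yb bv y (k - 1 - j)) w else 0)"
proof -
  have "triple_prod (\<lambda>a. pd (Hk bv m) i a y) (\<lambda>b. pd (Hk bv k) j b y) w =
      triple_prod (\<lambda>a. (if i < m then 2 else 0) * yb bv y (m - 1 - i) a)
        (\<lambda>b. (if j < k then 2 else 0) * yb bv y (k - 1 - j) b) w"
    by (rule triple_prod_cong) (use assms in \<open>auto simp: pd_Hk\<close>)
  then show ?thesis
    by (simp only: triple_prod_scale) simp
qed

lemma pbracket_Ck_coord:
  assumes "1 \<le> k" and "j < N"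
  shows "pbracket N (Ck N k) (coord j \<beta>) y = 0"
proof -
  define G where "G p q = 2 * triple_prod (y p) (\<lambda>b. if b = \<beta> then 1 else 0) (y q)" for p q
  have "pbracket N (Ck N k) (coord j \<beta>) y =
      (\<Sum>i<N. if i \<in> {k - 1..<N - j} then G (N + k - 2 - i) (i + j) else 0)"
    unfolding pbracket_coord[OF assms(2)] triple_prod_pd_Ck[OF assms(1)] G_def
    by (intro sum.cong refl) auto
  also have "\<dots> = (\<Sum>i\<in>{k - 1..<N - j}. G (N + k - 2 - i) (i + j))"
    by (rule sum.mono_neutral_cong_right) auto
  also have "\<dots> = 0"
  proof (rule sum_antisymmetric_reflection_eq_0[OF _ assms(1)])
    show "G q p = - G p q" for p q
      unfolding G_def by (subst triple_prod_swap13) simp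
  qed
  finally show ?thesis .
qed

lemma sum_alternating_pairs_eq_0:
  fixes F :: "nat \<Rightarrow> nat \<Rightarrow> nat \<Rightarrow> real"
  assumes swap12: "\<And>p q r. F q p r = - F p q r" and swap23: "\<And>p q r. F p r q = - F p q r"
    and "m \<le> k" and "k \<le> N"
  shows "(\<Sum>(i,j)\<in>{(i,j). i < m \<and> j < k \<and> i + j < N}. F (m - 1 - i) (k - 1 - j) (i + j + 1)) = 0"
proof -
  define R where "R = {(i,j). i < m \<and> j < k \<and> i + j < N}"
  define g where "g = (\<lambda>(i,j). F (m - 1 - i) (k - 1 - j) (i + j + 1))"
  define low where "low = {(i,j). i + j + 1 < k}"
  have fin: "finite R"
    by (rule finite_subset[of _ "{..<m} \<times> {..<k}"]) (auto simp: R_def)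
  (* With (p, q, r) = (m - 1 - i, k - 1 - j, i + j + 1), the involution on low swaps q and r,
     the one on its complement swaps p and q. *)
  have "sum g (R \<inter> low) = 0"
  proof (rule sum_eq_0_by_sign_reversing_involution[where h="\<lambda>(i,j). (i, k - 2 - i - j)"])
    fix x assume "x \<in> R \<inter> low"
    then obtain i j where x: "x = (i,j)" and ij: "i < m" "j < k" "i + j < N" "i + j + 1 < k"
      by (auto simp: R_def low_def)
    have "k - 2 - i - j < k" "i + (k - 2 - i - j) < N" "i + (k - 2 - i - j) + 1 < k"
      using ij assms(3,4) by linarith+
    then show "(\<lambda>(i,j). (i, k - 2 - i - j)) x \<in> R \<inter> low"
      using ij by (simp add: x R_def low_def)
    have "k - 2 - i - (k - 2 - i - j) = j"
      using ij by linarith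
    then show "(\<lambda>(i,j). (i, k - 2 - i - j)) ((\<lambda>(i,j). (i, k - 2 - i - j)) x) = x"
      by (simp add: x)
    have idx: "k - 1 - (k - 2 - i - j) = i + j + 1" "i + (k - 2 - i - j) + 1 = k - 1 - j"
      using ij by linarith+
    show "g ((\<lambda>(i,j). (i, k - 2 - i - j)) x) = - g x"
      unfolding x g_def prod.case idx by (rule swap23)
  qed (use fin in simp)
  moreover have "sum g (R - low) = 0"
  proof (rule sum_eq_0_by_sign_reversing_involution[where h="\<lambda>(i,j). (j - (k - m), i + (k - m))"])
    fix x assume "x \<in> R - low"
    then obtain i j where x: "x = (i,j)" and ij: "i < m" "j < k" "i + j < N" "\<not> i + j + 1 < k"
      by (auto simp: R_def low_def)
    have "j - (k - m) < m" "i + (k - m) < k" "j - (k - m) + (i + (k - m)) < N"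
      "\<not> j - (k - m) + (i + (k - m)) + 1 < k"
      using ij assms(3,4) by linarith+
    then show "(\<lambda>(i,j). (j - (k - m), i + (k - m))) x \<in> R - low"
      by (simp add: x R_def low_def)
    have "i + (k - m) - (k - m) = i" "j - (k - m) + (k - m) = j"
      using ij assms(3) by linarith+
    then show "(\<lambda>(i,j). (j - (k - m), i + (k - m))) ((\<lambda>(i,j). (j - (k - m), i + (k - m))) x) = x"
      by (simp add: x)
    have idx: "m - 1 - (j - (k - m)) = k - 1 - j" "k - 1 - (i + (k - m)) = m - 1 - i"
      "j - (k - m) + (i + (k - m)) + 1 = i + j + 1"
      using ij assms(3) by linarith+
    show "g ((\<lambda>(i,j). (j - (k - m), i + (k - m))) x) = - g x"
      unfolding x g_def prod.case idx by (rule swap12)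
  qed (use fin in simp)
  ultimately show ?thesis
    using sum.Int_Diff[OF fin, of g low] by (simp add: R_def g_def)
qed

lemma pbracket_Hk_Hk_le:
  assumes "1 \<le> m" and "m \<le> k" and "k \<le> N"
  shows "pbracket N (Hk bv m) (Hk bv k) y = 0"
proof -
  define F where "F p q r = 4 * triple_prod (yb bv y p) (yb bv y q) (yb bv y r)" for p q r
  have "pbracket N (Hk bv m) (Hk bv k) y =
      (\<Sum>i<N. \<Sum>j<N. if i < m \<and> j < k \<and> i + j < N then F (m - 1 - i) (k - 1 - j) (i + j + 1) else 0)"
    unfolding pbracket_eq_triple_prod triple_prod_pd_Hk[OF assms(1) order_trans[OF assms(1,2)]]
    by (intro sum.cong refl) (auto simp: F_def yb_def)
  also have "\<dots> = (\<Sum>(i,j)\<in>{..<N} \<times> {..<N}.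
      if i < m \<and> j < k \<and> i + j < N then F (m - 1 - i) (k - 1 - j) (i + j + 1) else 0)"
    by (rule sum.cartesian_product)
  also have "\<dots> = (\<Sum>(i,j)\<in>{(i,j). i < m \<and> j < k \<and> i + j < N}. F (m - 1 - i) (k - 1 - j) (i + j + 1))"
    by (rule sum.mono_neutral_cong_right) (use assms in \<open>auto split: if_split_asm\<close>)
  also have "\<dots> = 0"
  proof (rule sum_alternating_pairs_eq_0[OF _ _ assms(2,3)])
    show "F q p r = - F p q r" and "F p r q = - F p q r" for p q r
      unfolding F_def by (subst triple_prod_swap12 triple_prod_swap23, simp)+
  qed
  finally show ?thesis .
qed

lemma pbracket_Hk_Hk:
  assumes "m \<in> {1..N}" and "k \<in> {1..N}"
  shows "pbracket N (Hk bv m) (Hk bv k) y = 0"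
proof (cases "m \<le> k")
  case False
  then show ?thesis
    using pbracket_Hk_Hk_le[of k m N] pbracket_antisym[of N "Hk bv m"] assms by simp
qed (use pbracket_Hk_Hk_le assms in auto)

theorem proposition2:
  fixes N :: nat and bv :: "nat \<Rightarrow> real"
  assumes "N \<ge> 1"
  shows "(\<forall>y lam mu. lam \<noteq> 0 \<longrightarrow>
           4 * det (Lax N bv y lam - msc mu (mat 1)) =
             4 * mu ^ 2 + of_real (ip bv bv)
             + (\<Sum>k\<in>{1..N}. of_real (Hk bv k y) * inverse lam ^ k)
             + (\<Sum>k\<in>{1..N}. of_real (Ck N k y) * inverse lam ^ (N + k)))
       \<and> (\<forall>i\<in>{1..N}. \<forall>k\<in>{1..N}.
            pbracket N (Hk bv i) (Hk bv k) = (\<lambda>y. 0)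
          \<and> pbracket N (Ck N i) (Hk bv k) = (\<lambda>y. 0)
          \<and> pbracket N (Ck N i) (Ck N k) = (\<lambda>y. 0))
       \<and> (\<forall>k\<in>{1..N}. \<forall>j<N. \<forall>\<beta>\<in>{1,2,3}.
            pbracket N (Ck N k) (coord j \<beta>) = (\<lambda>y. 0))"
proof (intro conjI)
  show "\<forall>y lam mu. lam \<noteq> 0 \<longrightarrow>
           4 * det (Lax N bv y lam - msc mu (mat 1)) =
             4 * mu ^ 2 + of_real (ip bv bv)
             + (\<Sum>k\<in>{1..N}. of_real (Hk bv k y) * inverse lam ^ k)
             + (\<Sum>k\<in>{1..N}. of_real (Ck N k y) * inverse lam ^ (N + k))"
    using det_Lax_expansion by blast
  show "\<forall>i\<in>{1..N}. \<forall>k\<in>{1..N}.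
            pbracket N (Hk bv i) (Hk bv k) = (\<lambda>y. 0)
          \<and> pbracket N (Ck N i) (Hk bv k) = (\<lambda>y. 0)
          \<and> pbracket N (Ck N i) (Ck N k) = (\<lambda>y. 0)"
  proof (intro ballI conjI ext)
    fix i k y assume i: "i \<in> {1..N}" and k: "k \<in> {1..N}"
    have casimir: "pbracket N (Ck N i) (coord j b) y = 0" if "j < N" for j b
      using pbracket_Ck_coord i that by simp
    show "pbracket N (Hk bv i) (Hk bv k) y = 0"
      using pbracket_Hk_Hk[OF i k] .
    show "pbracket N (Ck N i) (Hk bv k) y = 0" and "pbracket N (Ck N i) (Ck N k) y = 0"
      using pbracket_eq_0_if_casimir casimir by blast+
  qed
  show "\<forall>k\<in>{1..N}. \<forall>j<N. \<forall>\<beta>\<in>{1,2,3}. pbracket N (Ck N k) (coord j \<beta>) = (\<lambda>y. 0)"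
    using pbracket_Ck_coord by (auto intro!: ext)
qed

end
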